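(* Let $\theta$ be the logarithmic mean and let $z=(z_1,z_2)\in\mathbb{R}^2$. If $\min\{z_1,z_2\}\le0$ then $z\notin\partial^+\theta(0)$. Otherwise there is a unique $q_1\in(0,\infty)$ with $\partial_1\theta(q_1^{-1/2},q_1^{1/2})=z_1$, and $z\in\partial^+\theta(0)$ if and only if $z_2\ge\partial_2\theta(q_1^{-1/2},q_1^{1/2})$.
   Context: The logarithmic mean $\theta:[0,\infty)^2\to[0,\infty)$ is $\theta(s,t)=0$ if $s=0$ or $t=0$, $\theta(s,s)=s$, and $\theta(s,t)=\frac{t-s}{\log t-\log s}$ otherwise; it is regarded as a concave function $\mathbb{R}^2\to\mathbb{R}\cup\{-\infty\}$ with $\theta(s,t)=-\infty$ if $\min\{s,t\}<0$. The super-differential is $\partial^+\theta(x)=\{r\in\mathbb{R}^2:\theta(y)\le\theta(x)+\langle r,y-x\rangle\ \forall y\in\mathbb{R}^2\}$. *)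

theory Defs
  imports "HOL-Analysis.Analysis"
begin

text \<open>The logarithmic mean on [0,\<infinity>)^2 (real-valued; values outside are irrelevant).\<close>
definition logmean :: "real \<Rightarrow> real \<Rightarrow> real" where
  "logmean s t = (if s = 0 \<or> t = 0 then 0 else if s = t then s
                  else (t - s) / (ln t - ln s))"

text \<open>The logarithmic mean as a concave function R^2 to R with -\<infinity>.\<close>
definition theta :: "real \<times> real \<Rightarrow> ereal" where
  "theta x = (if min (fst x) (snd x) < 0 then -\<infinity> else ereal (logmean (fst x) (snd x)))"

definition superdiff :: "(real \<times> real \<Rightarrow> ereal) \<Rightarrow> real \<times> real \<Rightarrow> (real \<times> real) set" where
  "superdiff f x = {r. \<forall>y. f y \<le> f x + ereal (inner r (y - x))}"

end

theory Submission
  imports Defs "HOL-Real_Asymp.Real_Asymp"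
begin

text \<open>
  Since \<theta> is concave and positively 1-homogeneous, z is a supergradient at the origin iff
  \<theta>(s,t) \<le> z1 s + z2 t on the closed quadrant. As \<theta> is unbounded on the lines
  {(s,1)} and {(1,t)}, this forces z1, z2 > 0. The partial derivatives of \<theta> are
  0-homogeneous, so at (q^(-1/2), q^(1/2)) they equal g(q) = \<partial>1 \<theta>(1,q) and
  g(1/q) = \<partial>2 \<theta>(1,q), and g is a strictly increasing bijection of (0,\<infinity>) onto
  itself; this gives the unique q1. By Euler's identity \<theta>(1,q) = g(q) + g(1/q) q the
  tangent plane of \<theta> at (1,q1) passes through the origin, so concavity of t \<mapsto> \<theta>(1,t)
  makes (z1, g(1/q1)) a supergradient, and evaluating at (1,q1) shows that no smaller second
  coordinate gives one.
\<close>

lemma logmean_commute: "logmean s t = logmean t s"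
  unfolding logmean_def by (auto simp: divide_simps) (auto simp: algebra_simps)

lemma logmean_scale:
  "0 < c \<Longrightarrow> 0 < s \<Longrightarrow> 0 < t \<Longrightarrow> logmean (c * s) (c * t) = c * logmean s t"
  unfolding logmean_def by (auto simp: ln_mult right_diff_distrib)

lemma ln_less_minus_one:
  fixes x :: real
  assumes "0 < x" "x \<noteq> 1"
  shows "ln x < x - 1"
  using ln_le_minus_one[OF assms(1)] ln_eq_minus_one[OF assms(1)] assms(2) by force

lemma logmean_unbounded: "\<exists>s>0. c < logmean s 1"
proof -
  have "filterlim (\<lambda>s::real. (s - 1) / ln s) at_top at_top" by real_asymp
  then have "\<forall>\<^sub>F s in at_top. c < (s - 1) / ln s \<and> 1 < s"
    using filterlim_at_top_dense eventually_gt_at_top eventually_conj by blast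
  then obtain s where "c < (s - 1) / ln s" "1 < s"
    unfolding eventually_at_top_linorder by blast
  moreover have "logmean s 1 = (s - 1) / ln s"
    using \<open>1 < s\<close> by (simp add: logmean_def divide_simps)
  ultimately show ?thesis by (intro exI[of _ s]) auto
qed

text \<open>The partial derivative \<partial>1 \<theta>(1,q).\<close>
definition logmean_deriv1 :: "real \<Rightarrow> real" where
  "logmean_deriv1 q = (if q = 1 then 1/2 else (q - 1 - ln q) / (ln q)^2)"

lemma has_real_derivative_logmean_at_1:
  assumes q: "0 < q"
  shows "((\<lambda>u. logmean u q) has_real_derivative logmean_deriv1 q) (at 1)"
proof (cases "q = 1")
  case True
  have "\<forall>\<^sub>F u in at (1::real). u \<in> {0<..}"
    by (rule eventually_at_in_open') auto
  then have "\<forall>\<^sub>F u in at (1::real). ((u - 1) / ln u - 1) / (u - 1)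
               = (logmean u 1 - logmean 1 1) / (u - 1)"
    using eventually_neq_at_within[of 1 1] by eventually_elim (auto simp: logmean_def divide_simps)
  moreover have "((\<lambda>u::real. ((u - 1) / ln u - 1) / (u - 1)) \<longlongrightarrow> 1/2) (at 1)" by real_asymp
  ultimately have "((\<lambda>u. (logmean u 1 - logmean 1 1) / (u - 1)) \<longlongrightarrow> 1/2) (at 1)"
    by (rule tendsto_cong[THEN iffD1])
  then show ?thesis
    unfolding has_field_derivative_iff True by (simp add: logmean_deriv1_def)
next
  case False
  have "ln q \<noteq> 0" using q False by simp
  then have "((\<lambda>u. (q - u) / (ln q - ln u)) has_real_derivative
               ((0 - 1) * (ln q - ln 1) - (q - 1) * (0 - 1/1)) / ((ln q - ln 1) * (ln q - ln 1))) (at 1)"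
    by (auto intro!: derivative_eq_intros)
  then have "((\<lambda>u. (q - u) / (ln q - ln u)) has_real_derivative logmean_deriv1 q) (at 1)"
    using False by (simp add: logmean_deriv1_def power2_eq_square algebra_simps)
  then show ?thesis
    by (rule has_field_derivative_transform_within_open[where S = "{0<..} - {q}"])
       (use q False in \<open>auto simp: logmean_def\<close>)
qed

lemma has_real_derivative_logmean_fst:
  assumes a: "0 < a" and b: "0 < b"
  shows "((\<lambda>s. logmean s b) has_real_derivative logmean_deriv1 (b / a)) (at a)"
proof -
  have f: "((\<lambda>u. logmean u (b / a)) has_real_derivative logmean_deriv1 (b / a)) (at (a / a))"
    using has_real_derivative_logmean_at_1[of "b / a"] a b by simp
  have g: "((\<lambda>s. s / a) has_real_derivative 1 / a) (at a)"
    using a by (auto intro!: derivative_eq_intros)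
  from DERIV_chain2[OF f g]
  have "((\<lambda>s. a * logmean (s / a) (b / a)) has_real_derivative a * (logmean_deriv1 (b / a) * (1 / a))) (at a)"
    by (rule DERIV_cmult)
  then have "((\<lambda>s. a * logmean (s / a) (b / a)) has_real_derivative logmean_deriv1 (b / a)) (at a)"
    using a by simp
  then show ?thesis
  proof (rule has_field_derivative_transform_within_open[where S = "{0<..}"])
    fix s :: real assume "s \<in> {0<..}"
    then show "a * logmean (s / a) (b / a) = logmean s b"
      using logmean_scale[of a "s / a" "b / a"] a b by simp
  qed (use a in auto)
qed

lemma has_real_derivative_logmean_snd:
  "0 < a \<Longrightarrow> 0 < b \<Longrightarrow> ((\<lambda>t. logmean a t) has_real_derivative logmean_deriv1 (a / b)) (at b)"
  using has_real_derivative_logmean_fst[of b a] by (simp add: logmean_commute)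

lemma logmean_euler_identity:
  assumes q: "0 < q"
  shows "logmean 1 q = logmean_deriv1 q + logmean_deriv1 (1 / q) * q"
proof (cases "q = 1")
  case False
  then have L: "ln q \<noteq> 0" using q by simp
  have "logmean_deriv1 q + logmean_deriv1 (1 / q) * q = (q - 1) / ln q"
    using False q L by (simp add: logmean_deriv1_def ln_div field_simps power2_eq_square)
  then show ?thesis using False q by (simp add: logmean_def)
qed (simp add: logmean_def logmean_deriv1_def)

lemma logmean_deriv1_pos:
  assumes q: "0 < q"
  shows "0 < logmean_deriv1 q"
proof (cases "q = 1")
  case False
  then have "ln q < q - 1" "ln q \<noteq> 0"
    using q ln_less_minus_one by auto
  then show ?thesis using False by (simp add: logmean_deriv1_def)
qed (simp add: logmean_deriv1_def)

text \<open>Equivalently, the logarithmic mean of 1 and q is below their arithmetic mean.\<close>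
lemma two_diff_mult_ln_less_ln_sq:
  fixes q :: real
  assumes q: "0 < q" "q \<noteq> 1"
  shows "2 * (q - 1) * ln q < (q + 1) * (ln q)^2"
proof -
  define k where "k x = (x + 1) * ln x - 2 * (x - 1)" for x :: real
  have k': "\<exists>y. (k has_real_derivative y) (at x) \<and> y > 0" if "0 < x" "x \<noteq> 1" for x
  proof (intro exI conjI)
    show "(k has_real_derivative ln x + 1 / x - 1) (at x)"
      unfolding k_def using that by (auto intro!: derivative_eq_intros simp: field_simps)
    show "0 < ln x + 1 / x - 1"
      using ln_less_minus_one[of "1 / x"] that by (auto simp: ln_div)
  qed
  have cont: "continuous_on {x..y} k" if "0 < x" for x y
    unfolding k_def using that by (intro continuous_intros) auto
  consider "1 < q" | "q < 1" using q by linarith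
  then have "0 < k q * ln q"
  proof cases
    case 1
    have "k 1 < k q"
      by (rule DERIV_pos_imp_increasing_open[OF 1 k' cont]) auto
    then show ?thesis using 1 by (simp add: k_def)
  next
    case 2
    have "k q < k 1"
      by (rule DERIV_pos_imp_increasing_open[OF 2 k' cont]) (use q in auto)
    then show ?thesis using 2 q by (simp add: k_def mult_neg_neg)
  qed
  then show ?thesis by (simp add: k_def power2_eq_square algebra_simps)
qed

lemma logmean_deriv1_has_pos_derivative:
  assumes q: "0 < q"
  shows "\<exists>D>0. (logmean_deriv1 has_real_derivative D) (at q)"
proof (cases "q = 1")
  case True
  have "((\<lambda>u::real. ((u - 1 - ln u) / (ln u)^2 - 1/2) / (u - 1)) \<longlongrightarrow> 1/6) (at 1)" by real_asymp
  moreover have "\<forall>\<^sub>F u in at (1::real). ((u - 1 - ln u) / (ln u)^2 - 1/2) / (u - 1)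
                   = (logmean_deriv1 u - logmean_deriv1 1) / (u - 1)"
    using eventually_neq_at_within[of 1 1] by eventually_elim (simp add: logmean_deriv1_def)
  ultimately have "(logmean_deriv1 has_real_derivative 1/6) (at 1)"
    unfolding has_field_derivative_iff by (rule tendsto_cong[THEN iffD1, rotated])
  then show ?thesis using True by (intro exI[of _ "1/6"]) auto
next
  case False
  define D where "D = ((q + 1) * (ln q)^2 - 2 * (q - 1) * ln q) / (q * (ln q)^4)"
  have L: "ln q \<noteq> 0" using q False by simp
  have "((\<lambda>u. (u - 1 - ln u) / (ln u)^2) has_real_derivative
          ((1 - 0 - 1 / q) * (ln q)^2 - (q - 1 - ln q) * (of_nat 2 * ln q ^ (2 - 1) * (1 / q)))
            / ((ln q)^2 * (ln q)^2)) (at q)"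
    using q L by (auto intro!: derivative_eq_intros)
  moreover have "((1 - 0 - 1 / q) * (ln q)^2 - (q - 1 - ln q) * (of_nat 2 * ln q ^ (2 - 1) * (1 / q)))
                   / ((ln q)^2 * (ln q)^2) = D"
    using q L by (simp add: D_def field_simps power2_eq_square power4_eq_xxxx)
  ultimately have "((\<lambda>u. (u - 1 - ln u) / (ln u)^2) has_real_derivative D) (at q)"
    by simp
  then have "(logmean_deriv1 has_real_derivative D) (at q)"
    by (rule has_field_derivative_transform_within_open[where S = "{0<..} - {1}"])
       (use q False in \<open>auto simp: logmean_deriv1_def\<close>)
  moreover have "0 < D"
    using two_diff_mult_ln_less_ln_sq[OF q False] q L by (simp add: D_def)
  ultimately show ?thesis by blast
qed

lemma isCont_logmean_deriv1: "0 < q \<Longrightarrow> isCont logmean_deriv1 q"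
  using logmean_deriv1_has_pos_derivative DERIV_isCont by blast

lemma logmean_deriv1_strict_mono: "strict_mono_on {0<..} logmean_deriv1"
proof (rule strict_mono_onI)
  fix x y :: real assume "x \<in> {0<..}" "y \<in> {0<..}" "x < y"
  then have x: "0 < x" by simp
  show "logmean_deriv1 x < logmean_deriv1 y"
  proof (rule DERIV_pos_imp_increasing_open[OF \<open>x < y\<close>])
    fix u assume "x < u"
    then show "\<exists>D. (logmean_deriv1 has_real_derivative D) (at u) \<and> D > 0"
      using logmean_deriv1_has_pos_derivative[of u] x by auto
  next
    show "continuous_on {x..y} logmean_deriv1"
      using isCont_logmean_deriv1 x by (intro continuous_at_imp_continuous_on) auto
  qed
qed

lemma tendsto_logmean_deriv1_at_right_0: "(logmean_deriv1 \<longlongrightarrow> 0) (at_right 0)"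
proof -
  have "\<forall>\<^sub>F q in at_right (0::real). (q - 1 - ln q) / (ln q)^2 = logmean_deriv1 q"
    by (rule eventually_at_rightI[of 0 1]) (auto simp: logmean_deriv1_def)
  moreover have "((\<lambda>q::real. (q - 1 - ln q) / (ln q)^2) \<longlongrightarrow> 0) (at_right 0)" by real_asymp
  ultimately show ?thesis by (rule tendsto_cong[THEN iffD1])
qed

lemma filterlim_logmean_deriv1_at_top: "filterlim logmean_deriv1 at_top at_top"
proof -
  have "\<forall>\<^sub>F q in at_top. (q - 1 - ln q) / (ln q)^2 = logmean_deriv1 q"
    using eventually_gt_at_top[of 1] by eventually_elim (auto simp: logmean_deriv1_def)
  moreover have "filterlim (\<lambda>q::real. (q - 1 - ln q) / (ln q)^2) at_top at_top" by real_asymp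
  ultimately show ?thesis by (rule filterlim_cong[THEN iffD1, OF refl refl])
qed

lemma logmean_deriv1_bij:
  assumes z: "0 < z"
  shows "\<exists>!q. 0 < q \<and> logmean_deriv1 q = z"
proof -
  from eventually_at_right_less tendsto_logmean_deriv1_at_right_0[THEN order_tendstoD(2), OF z]
  have "\<forall>\<^sub>F q in at_right 0. 0 < q \<and> logmean_deriv1 q < z"
    by (rule eventually_conj)
  then obtain x where x: "0 < x" "logmean_deriv1 x < z"
    using eventually_happens[of _ "at_right (0::real)"] by auto
  have "\<forall>\<^sub>F q in at_top. x \<le> q \<and> z < logmean_deriv1 q"
    using filterlim_logmean_deriv1_at_top filterlim_at_top_dense eventually_ge_at_top eventually_conj
    by blast
  then obtain y where y: "x \<le> y" "z < logmean_deriv1 y"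
    unfolding eventually_at_top_linorder by blast
  have "\<forall>u. x \<le> u \<and> u \<le> y \<longrightarrow> isCont logmean_deriv1 u"
    using x isCont_logmean_deriv1 by simp
  then obtain q where "x \<le> q" "logmean_deriv1 q = z"
    using IVT[of logmean_deriv1 x z y] x y by auto
  then show ?thesis
    using x logmean_deriv1_strict_mono strict_mono_on_eqD[of "{0<..}" logmean_deriv1]
    by (intro ex1I[of _ q]) auto
qed

lemma concave_on_logmean_1: "concave_on {0<..} (logmean 1)"
  unfolding concave_on_def
proof (rule convex_on_realI[where f' = "\<lambda>t. - logmean_deriv1 (1 / t)"])
  fix t :: real assume "t \<in> {0<..}"
  then show "((\<lambda>t. - logmean 1 t) has_real_derivative - logmean_deriv1 (1 / t)) (at t)"
    by (intro DERIV_minus has_real_derivative_logmean_snd) auto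
next
  fix x y :: real assume "x \<in> {0<..}" "y \<in> {0<..}" "x \<le> y"
  then show "- logmean_deriv1 (1 / x) \<le> - logmean_deriv1 (1 / y)"
    using strict_mono_on_leD[OF logmean_deriv1_strict_mono, of "1 / y" "1 / x"]
    by (simp add: frac_le)
qed auto

text \<open>The right-hand side is the tangent plane of \<theta> at (1,q).\<close>
lemma logmean_le_tangent_plane:
  assumes q: "0 < q" and s: "0 \<le> s" and t: "0 \<le> t"
  shows "logmean s t \<le> logmean_deriv1 q * s + logmean_deriv1 (1 / q) * t"
proof (cases "s = 0 \<or> t = 0")
  case True
  then have "logmean s t = 0" by (auto simp: logmean_def)
  moreover have "0 \<le> logmean_deriv1 q * s + logmean_deriv1 (1 / q) * t"
    using logmean_deriv1_pos[OF q] logmean_deriv1_pos[of "1 / q"] q s t by simp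
  ultimately show ?thesis by simp
next
  case False
  then have s: "0 < s" and t: "0 < t" using s t by auto
  have convex: "convex_on {0<..} (\<lambda>t. - logmean 1 t)"
    using concave_on_logmean_1 by (simp add: concave_on_def)
  have deriv: "((\<lambda>t. - logmean 1 t) has_real_derivative - logmean_deriv1 (1 / q)) (at q)"
    using q by (intro DERIV_minus has_real_derivative_logmean_snd) auto
  have "- logmean_deriv1 (1 / q) * (t / s - q) \<le> - logmean 1 (t / s) - - logmean 1 q"
    using q s t
    by (intro convex_on_imp_above_tangent[OF convex] has_field_derivative_at_within[OF deriv])
       (simp_all add: interior_open)
  then have "logmean 1 (t / s) \<le> logmean_deriv1 q + logmean_deriv1 (1 / q) * (t / s)"
    using logmean_euler_identity[OF q] by (simp add: algebra_simps)
  then have "s * logmean 1 (t / s) \<le> s * (logmean_deriv1 q + logmean_deriv1 (1 / q) * (t / s))"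
    using s by (simp add: mult_left_mono)
  also have "\<dots> = logmean_deriv1 q * s + logmean_deriv1 (1 / q) * t"
    using s by (simp add: distrib_left)
  finally show ?thesis
    using logmean_scale[of s 1 "t / s"] s t by simp
qed

lemma superdiff_theta_origin_iff:
  "(z1, z2) \<in> superdiff theta (0, 0) \<longleftrightarrow>
     (\<forall>s t. 0 \<le> s \<longrightarrow> 0 \<le> t \<longrightarrow> logmean s t \<le> z1 * s + z2 * t)"
proof -
  have "theta (0, 0) = ereal 0" by (simp add: theta_def logmean_def)
  then have "(z1, z2) \<in> superdiff theta (0, 0) \<longleftrightarrow> (\<forall>y. theta y \<le> ereal (z1 * fst y + z2 * snd y))"
    unfolding superdiff_def by (simp add: inner_prod_def zero_prod_def)
  also have "\<dots> \<longleftrightarrow> (\<forall>s t. 0 \<le> s \<longrightarrow> 0 \<le> t \<longrightarrow> logmean s t \<le> z1 * s + z2 * t)"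
  proof (intro iffI allI impI)
    fix s t :: real
    assume h: "\<forall>y. theta y \<le> ereal (z1 * fst y + z2 * snd y)" and "0 \<le> s" "0 \<le> t"
    then have "theta (s, t) = ereal (logmean s t)" by (simp add: theta_def)
    then show "logmean s t \<le> z1 * s + z2 * t"
      using h[rule_format, of "(s, t)"] by simp
  next
    fix y :: "real \<times> real"
    assume "\<forall>s t. 0 \<le> s \<longrightarrow> 0 \<le> t \<longrightarrow> logmean s t \<le> z1 * s + z2 * t"
    then show "theta y \<le> ereal (z1 * fst y + z2 * snd y)"
      by (cases y) (auto simp: theta_def)
  qed
  finally show ?thesis .
qed

lemma superdiff_theta_origin_pos:
  assumes "(z1, z2) \<in> superdiff theta (0, 0)"
  shows "0 < min z1 z2"
proof (rule ccontr)
  assume "\<not> 0 < min z1 z2"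
  then consider "z1 \<le> 0" | "z2 \<le> 0" by linarith
  then show False
  proof cases
    case 1
    obtain s where s: "0 < s" "z2 < logmean s 1" using logmean_unbounded by blast
    have "logmean s 1 \<le> z1 * s + z2"
      using assms[unfolded superdiff_theta_origin_iff, rule_format, of s 1] s by simp
    moreover have "z1 * s \<le> 0" using 1 s by (simp add: mult_nonpos_nonneg)
    ultimately show False using s by linarith
  next
    case 2
    obtain t where t: "0 < t" "z1 < logmean t 1" using logmean_unbounded by blast
    have "logmean 1 t \<le> z1 + z2 * t"
      using assms[unfolded superdiff_theta_origin_iff, rule_format, of 1 t] t by simp
    moreover have "z2 * t \<le> 0" using 2 t by (simp add: mult_nonpos_nonneg)
    ultimately show False using t logmean_commute[of t 1] by linarith
  qed
qed

lemma superdiff_theta_origin_iff_deriv1: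
  assumes q: "0 < q"
  shows "(logmean_deriv1 q, z2) \<in> superdiff theta (0, 0) \<longleftrightarrow> logmean_deriv1 (1 / q) \<le> z2"
  unfolding superdiff_theta_origin_iff
proof
  assume "\<forall>s t. 0 \<le> s \<longrightarrow> 0 \<le> t \<longrightarrow> logmean s t \<le> logmean_deriv1 q * s + z2 * t"
  from this[rule_format, of 1 q] have "logmean 1 q \<le> logmean_deriv1 q + z2 * q" using q by simp
  then show "logmean_deriv1 (1 / q) \<le> z2"
    using logmean_euler_identity[OF q] q by simp
next
  assume z2: "logmean_deriv1 (1 / q) \<le> z2"
  show "\<forall>s t. 0 \<le> s \<longrightarrow> 0 \<le> t \<longrightarrow> logmean s t \<le> logmean_deriv1 q * s + z2 * t"
  proof (intro allI impI)
    fix s t :: real assume st: "0 \<le> s" "0 \<le> t"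
    have "logmean s t \<le> logmean_deriv1 q * s + logmean_deriv1 (1 / q) * t"
      using logmean_le_tangent_plane[OF q st] .
    also have "\<dots> \<le> logmean_deriv1 q * s + z2 * t"
      using z2 st by (simp add: mult_right_mono)
    finally show "logmean s t \<le> logmean_deriv1 q * s + z2 * t" .
  qed
qed

lemma deriv_logmean_fst_powr:
  "0 < q \<Longrightarrow> deriv (\<lambda>s. logmean s (q powr (1/2))) (q powr (-1/2)) = logmean_deriv1 q"
  using has_real_derivative_logmean_fst[of "q powr (-1/2)" "q powr (1/2)"]
    powr_diff[of q "1/2" "-1/2"]
  by (simp add: DERIV_imp_deriv)

lemma deriv_logmean_snd_powr:
  "0 < q \<Longrightarrow> deriv (\<lambda>t. logmean (q powr (-1/2)) t) (q powr (1/2)) = logmean_deriv1 (1 / q)"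
  using has_real_derivative_logmean_snd[of "q powr (-1/2)" "q powr (1/2)"]
    powr_diff[of q "-1/2" "1/2"] powr_minus_divide[of q 1]
  by (simp add: DERIV_imp_deriv)

theorem lemma4p7:
  fixes z1 z2 :: real
  shows "(min z1 z2 \<le> 0 \<longrightarrow> (z1, z2) \<notin> superdiff theta (0, 0)) \<and>
         (min z1 z2 > 0 \<longrightarrow>
            (\<exists>!q1. q1 > 0 \<and> deriv (\<lambda>s. logmean s (q1 powr (1/2))) (q1 powr (-1/2)) = z1) \<and>
            (\<forall>q1. q1 > 0 \<and> deriv (\<lambda>s. logmean s (q1 powr (1/2))) (q1 powr (-1/2)) = z1 \<longrightarrow>
               ((z1, z2) \<in> superdiff theta (0, 0) \<longleftrightarrow>
                z2 \<ge> deriv (\<lambda>t. logmean (q1 powr (-1/2)) t) (q1 powr (1/2)))))"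
proof (intro conjI impI allI)
  show "min z1 z2 \<le> 0 \<Longrightarrow> (z1, z2) \<notin> superdiff theta (0, 0)"
    using superdiff_theta_origin_pos by fastforce
  have q1_iff: "q > 0 \<and> deriv (\<lambda>s. logmean s (q powr (1/2))) (q powr (-1/2)) = z1
                \<longleftrightarrow> q > 0 \<and> logmean_deriv1 q = z1" for q
    using deriv_logmean_fst_powr by auto
  assume "min z1 z2 > 0"
  then show "\<exists>!q1. q1 > 0 \<and> deriv (\<lambda>s. logmean s (q1 powr (1/2))) (q1 powr (-1/2)) = z1"
    unfolding q1_iff by (intro logmean_deriv1_bij) simp
  fix q assume "q > 0 \<and> deriv (\<lambda>s. logmean s (q powr (1/2))) (q powr (-1/2)) = z1"
  then have q: "0 < q" and z1: "z1 = logmean_deriv1 q" unfolding q1_iff by auto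
  show "(z1, z2) \<in> superdiff theta (0, 0) \<longleftrightarrow>
        z2 \<ge> deriv (\<lambda>t. logmean (q powr (-1/2)) t) (q powr (1/2))"
    unfolding z1 deriv_logmean_snd_powr[OF q] using superdiff_theta_origin_iff_deriv1[OF q] .
qed

end
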